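(* Let $\mathcal I,\mathcal J,\mathcal K$ be ideals on $\omega$ and let $X$ be a nonempty topological space. (1) Each of the following implies the next: (a) $|X|<\mathfrak b_s(\mathcal J,\mathcal J,\mathcal I)$; (b) for every sequence $(f_n)$ in $\mathcal C(X)$, $\mathcal I$-pointwise convergence to $0$ implies $\mathcal J$-quasi-normal convergence to $0$; (c) $\mathcal I\subseteq\mathcal J$. (2) Each of the following implies the next: (a) $|X|<\mathrm{add}_\omega(\mathcal J,\mathcal K)$; (b) for every $(f_n)$ in $\mathcal C(X)$, $\mathcal J$-quasi-normal convergence to $0$ implies $\mathcal K$-$\sigma$-uniform convergence to $0$; (c) $\mathcal J\subseteq\mathcal K$. (3) Each of the following implies the next: (a) $|X|<\mathfrak b_\sigma(\mathcal I,\mathcal K)$; (b) for every $(f_n)$ in $\mathcal C(X)$, $\mathcal I$-pointwise convergence to $0$ implies $\mathcal K$-$\sigma$-uniform convergence to $0$; (c) $\mathcal I\subseteq\mathcal K$.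
   Context: An ideal on $\omega$ is a family $\mathcal I\subseteq\mathcal P(\omega)$ closed under finite unions and subsets, containing all finite sets, with $\omega\notin\mathcal I$. A real sequence $(a_n)$ is $\mathcal I$-convergent to $0$ if $\{n:|a_n|\ge\varepsilon\}\in\mathcal I$ for all $\varepsilon>0$. For a sequence $(f_n)$ of real functions on a set $X$: $\mathcal I$-pointwise convergence to $0$ means $(f_n(x))$ is $\mathcal I$-convergent to $0$ for each $x$; $\mathcal I$-uniform means $\{n:\exists x\in X\,(|f_n(x)|\ge\varepsilon)\}\in\mathcal I$ for each $\varepsilon>0$; $\mathcal I$-$\sigma$-uniform means $X=\bigcup_{k\in\omega}X_k$ with $(f_n\restriction X_k)$ $\mathcal I$-uniformly convergent to $0$ for each $k$; $\mathcal I$-quasi-normal means there is a sequence $(\varepsilon_n)$ of positive reals $\mathcal I$-convergent to $0$ with $\{n:|f_n(x)|\ge\varepsilon_n\}\in\mathcal I$ for each $x$. $\mathcal C(X)$ = continuous real functions on $X$. Cardinals (convention $\min\emptyset=\infty$, and $\kappa<\infty$ for every cardinal $\kappa$): $\widehat{\mathcal P}_{\mathcal I}$ = sequences $(A_n)\in\mathcal I^\omega$ of pairwise disjoint sets; $\mathcal P_{\mathcal I}$ = those with $\bigcup_nA_n=\omega$; $\mathcal M_{\mathcal I}$ = sequences $(E_k)\in\mathcal I^\omega$ with $E_k\subseteq E_{k+1}$. $\mathfrak b_s(\mathcal I,\mathcal J,\mathcal K)=\min\{|\mathcal E|:\mathcal E\subseteq\widehat{\mathcal P}_{\mathcal K}$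 and for every $(A_n)\in\mathcal P_{\mathcal J}$ there is $(E_n)\in\mathcal E$ with $\bigcup_n(A_{n+1}\cap\bigcup_{i\le n}E_i)\notin\mathcal I\}$; $\mathfrak b_\sigma(\mathcal I,\mathcal J)=\min\{|\mathcal E|:\mathcal E\subseteq\mathcal M_{\mathcal I}$ and for every $(A_n)\in\mathcal M_{\mathcal J}$ there is $(E_n)\in\mathcal E$ with $E_n\not\subseteq A_n$ for infinitely many $n\}$; $\mathrm{add}_\omega(\mathcal I,\mathcal J)=\min\{|\mathcal A|:\mathcal A\subseteq\mathcal I$ and for every $(B_n)\in\mathcal J^\omega$ there is $A\in\mathcal A$ with $A\not\subseteq B_n$ for all $n\}$. *)

theory Defs
  imports "HOL-Analysis.Analysis" "HOL-Library.Equipollence"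
begin

definition ideal :: "nat set set \<Rightarrow> bool" where
  "ideal I \<longleftrightarrow> (\<forall>A\<in>I. \<forall>B\<in>I. A \<union> B \<in> I) \<and> (\<forall>A\<in>I. \<forall>B. B \<subseteq> A \<longrightarrow> B \<in> I)
     \<and> (\<forall>A. finite A \<longrightarrow> A \<in> I) \<and> UNIV \<notin> I"

definition I_conv0 :: "nat set set \<Rightarrow> (nat \<Rightarrow> real) \<Rightarrow> bool" where
  "I_conv0 I a \<longleftrightarrow> (\<forall>\<epsilon>>0. {n. \<bar>a n\<bar> \<ge> \<epsilon>} \<in> I)"

definition I_pointwise0 :: "nat set set \<Rightarrow> 'a set \<Rightarrow> (nat \<Rightarrow> 'a \<Rightarrow> real) \<Rightarrow> bool" where
  "I_pointwise0 I S f \<longleftrightarrow> (\<forall>x\<in>S. I_conv0 I (\<lambda>n. f n x))"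

definition I_uniform0 :: "nat set set \<Rightarrow> 'a set \<Rightarrow> (nat \<Rightarrow> 'a \<Rightarrow> real) \<Rightarrow> bool" where
  "I_uniform0 I S f \<longleftrightarrow> (\<forall>\<epsilon>>0. {n. \<exists>x\<in>S. \<bar>f n x\<bar> \<ge> \<epsilon>} \<in> I)"

definition I_sigma_uniform0 :: "nat set set \<Rightarrow> 'a set \<Rightarrow> (nat \<Rightarrow> 'a \<Rightarrow> real) \<Rightarrow> bool" where
  "I_sigma_uniform0 I S f \<longleftrightarrow>
     (\<exists>Xs :: nat \<Rightarrow> 'a set. S = (\<Union>k. Xs k) \<and> (\<forall>k. I_uniform0 I (Xs k) f))"

definition I_quasi_normal0 :: "nat set set \<Rightarrow> 'a set \<Rightarrow> (nat \<Rightarrow> 'a \<Rightarrow> real) \<Rightarrow> bool" where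
  "I_quasi_normal0 I S f \<longleftrightarrow>
     (\<exists>eps :: nat \<Rightarrow> real. (\<forall>n. eps n > 0) \<and> I_conv0 I eps \<and>
        (\<forall>x\<in>S. {n. \<bar>f n x\<bar> \<ge> eps n} \<in> I))"

definition hatP :: "nat set set \<Rightarrow> (nat \<Rightarrow> nat set) set" where
  "hatP I = {A. (\<forall>n. A n \<in> I) \<and> (\<forall>n m. n \<noteq> m \<longrightarrow> A n \<inter> A m = {})}"

definition partP :: "nat set set \<Rightarrow> (nat \<Rightarrow> nat set) set" where
  "partP I = {A. A \<in> hatP I \<and> (\<Union>n. A n) = UNIV}"

definition monoM :: "nat set set \<Rightarrow> (nat \<Rightarrow> nat set) set" where
  "monoM I = {E. (\<forall>n. E n \<in> I) \<and> (\<forall>k. E k \<subseteq> E (Suc k))}"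

text \<open>The families over which the cardinal invariants are minima.\<close>
definition bs_families :: "nat set set \<Rightarrow> nat set set \<Rightarrow> nat set set \<Rightarrow> (nat \<Rightarrow> nat set) set set" where
  "bs_families I J K = {\<E>. \<E> \<subseteq> hatP K \<and>
     (\<forall>A\<in>partP J. \<exists>E\<in>\<E>. (\<Union>n. A (Suc n) \<inter> (\<Union>i\<le>n. E i)) \<notin> I)}"

definition bsigma_families :: "nat set set \<Rightarrow> nat set set \<Rightarrow> (nat \<Rightarrow> nat set) set set" where
  "bsigma_families I J = {\<E>. \<E> \<subseteq> monoM I \<and>
     (\<forall>A\<in>monoM J. \<exists>E\<in>\<E>. infinite {n. \<not> E n \<subseteq> A n})}"

definition addw_families :: "nat set set \<Rightarrow> nat set set \<Rightarrow> nat set set set" where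
  "addw_families I J = {\<A>. \<A> \<subseteq> I \<and>
     (\<forall>B :: nat \<Rightarrow> nat set. (\<forall>n. B n \<in> J) \<longrightarrow> (\<exists>A\<in>\<A>. \<forall>n. \<not> A \<subseteq> B n))}"

text \<open>|S| < min {|F| : F \<in> Fam} (with min of the empty set = infinity),
  i.e. |S| < |F| for every F \<in> Fam.\<close>
definition card_less_min :: "'a set \<Rightarrow> 'b set set \<Rightarrow> bool" where
  "card_less_min S Fam \<longleftrightarrow> (\<forall>F\<in>Fam. S \<prec> F)"

end

theory Submission
  imports Defs
begin

text \<open>
  For the implications (a) \<Longrightarrow> (b), each point x contributes one witness: the
  disjointified threshold sets \<open>{n. 1/(k+2) \<le> |f n x|}\<close> (in \<open>hatP I\<close>), the
  increasing threshold sets (in \<open>monoM I\<close>), or the exceptional set \<open>{n. \<epsilon> n \<le> |f n x|} \<in> J\<close>.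
  This is a family of at most |X| members, so by the cardinal hypothesis it does not witness
  the cardinal: one partition \<open>A \<in> partP J\<close>, one \<open>A \<in> monoM K\<close>, or one sequence \<open>C\<close>
  in K controls every point. The partition gives \<open>\<epsilon> m = 1/(i+1)\<close> for \<open>m \<in> A i\<close>; in the
  other two cases X is the union of the pieces \<open>Xs k\<close> of points controlled by \<open>C k\<close>,
  resp. by \<open>A\<close> from stage k on.
  In (2) the hypothesis already forces \<open>J \<subseteq> K\<close> (for \<open>A \<in> J - K\<close> the singleton \<open>{A}\<close>
  would be a witness family), so \<open>\<epsilon>\<close> is also K-convergent.
  For (b) \<Longrightarrow> (c) apply (b) to the sequence of constant functions \<open>f n = indicator A n\<close>.
\<close>

lemma ideal_subset: "ideal I \<Longrightarrow> A \<in> I \<Longrightarrow> B \<subseteq> A \<Longrightarrow> B \<in> I"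
  unfolding ideal_def by blast

lemma ideal_Un: "ideal I \<Longrightarrow> A \<in> I \<Longrightarrow> B \<in> I \<Longrightarrow> A \<union> B \<in> I"
  unfolding ideal_def by blast

lemma ideal_finite: "ideal I \<Longrightarrow> finite A \<Longrightarrow> A \<in> I"
  unfolding ideal_def by blast

lemma ideal_finite_UN:
  assumes "ideal I" and "finite F" and "\<And>i. i \<in> F \<Longrightarrow> A i \<in> I"
  shows "(\<Union>i\<in>F. A i) \<in> I"
  using assms(2,3)
proof (induction F rule: finite_induct)
  case empty
  then show ?case using ideal_finite[OF \<open>ideal I\<close>] by simp
next
  case (insert i F)
  then show ?case using ideal_Un[OF \<open>ideal I\<close>] by simp
qed

lemma image_notin_if_card_less_min: "card_less_min S Fam \<Longrightarrow> g ` S \<notin> Fam"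
  unfolding card_less_min_def using image_lepoll lesspoll_trans2 lesspoll_not_refl by blast

lemma antitone_family_in_ideal:
  assumes "ideal I" and antitone: "\<And>e e'. e \<le> e' \<Longrightarrow> P e' \<subseteq> P e"
    and small: "\<And>j. k \<le> j \<Longrightarrow> P (inverse (real (Suc j))) \<in> I" and "0 < e"
  shows "P e \<in> I"
proof -
  obtain N where N: "inverse (real (Suc N)) < e"
    using reals_Archimedean[OF \<open>0 < e\<close>] by blast
  have "inverse (real (Suc (max k N))) \<le> inverse (real (Suc N))"
    by simp
  then have "P e \<subseteq> P (inverse (real (Suc (max k N))))"
    using N by (intro antitone) linarith
  then show ?thesis
    by (rule ideal_subset[OF \<open>ideal I\<close> small[OF max.cobounded1]])
qed

lemma I_conv0_inverse_Suc:
  assumes "ideal I" and "\<And>j. {m. g m \<le> j} \<in> I"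
  shows "I_conv0 I (\<lambda>m. inverse (real (Suc (g m))))"
  unfolding I_conv0_def
proof (intro allI impI)
  fix e :: real
  assume "0 < e"
  show "{m. e \<le> \<bar>inverse (real (Suc (g m)))\<bar>} \<in> I"
  proof (rule antitone_family_in_ideal[where k = 0, OF \<open>ideal I\<close> _ _ \<open>0 < e\<close>])
    show "{m. e' \<le> \<bar>inverse (real (Suc (g m)))\<bar>} \<subseteq> {m. e \<le> \<bar>inverse (real (Suc (g m)))\<bar>}"
      if "e \<le> e'" for e e' :: real
      using that by auto
    show "{m. inverse (real (Suc j)) \<le> \<bar>inverse (real (Suc (g m)))\<bar>} \<in> I" for j
      using assms(2)[of j] by simp
  qed
qed

definition part_index :: "(nat \<Rightarrow> nat set) \<Rightarrow> nat \<Rightarrow> nat" where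
  "part_index A m = (THE k. m \<in> A k)"

lemma part_index_eq: "A \<in> partP I \<Longrightarrow> m \<in> A k \<Longrightarrow> part_index A m = k"
  unfolding part_index_def partP_def hatP_def by blast

lemma in_part_index: "A \<in> partP I \<Longrightarrow> m \<in> A (part_index A m)"
  using part_index_eq unfolding partP_def by blast

lemma part_index_atMost: "A \<in> partP I \<Longrightarrow> {m. part_index A m \<le> j} = (\<Union>i\<le>j. A i)"
  using part_index_eq in_part_index by fastforce

lemma disjointed_in_hatP: "ideal I \<Longrightarrow> (\<And>k. G k \<in> I) \<Longrightarrow> disjointed G \<in> hatP I"
  unfolding hatP_def
  using disjoint_family_disjointed[of G] ideal_subset[OF _ _ disjointed_subset]
  by (auto simp: disjoint_family_on_def)

lemma UN_atMost_disjointed: "mono G \<Longrightarrow> (\<Union>i\<le>n. disjointed G i) = G n"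
  using finite_UN_disjointed_eq[of G "Suc n"] mono_imp_UN_eq_last[of G n]
  by (simp add: atLeast0LessThan lessThan_Suc_atMost)

lemma I_quasi_normal0_if_card_less_bs_families:
  assumes "ideal I" and "ideal J" and card: "card_less_min S (bs_families J J I)"
    and pointwise: "I_pointwise0 I S f"
  shows "I_quasi_normal0 J S f"
proof -
  define G where "G x k = {n. inverse (real (Suc (Suc k))) \<le> \<bar>f n x\<bar>}" for x k
  have "G x k \<in> I" if "x \<in> S" for x k
    using pointwise that unfolding I_pointwise0_def I_conv0_def G_def by simp
  then have "(\<lambda>x. disjointed (G x)) ` S \<subseteq> hatP I"
    using disjointed_in_hatP[OF \<open>ideal I\<close>] by blast
  moreover have "(\<lambda>x. disjointed (G x)) ` S \<notin> bs_families J J I"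
    by (rule image_notin_if_card_less_min[OF card])
  ultimately have "\<exists>A\<in>partP J. \<forall>x\<in>S. (\<Union>n. A (Suc n) \<inter> (\<Union>i\<le>n. disjointed (G x) i)) \<in> J"
    unfolding bs_families_def by simp
  moreover have "mono (G x)" for x
    unfolding G_def by (intro monoI) (auto elim!: order.trans[rotated])
  ultimately obtain A where A: "A \<in> partP J"
    and small: "\<And>x. x \<in> S \<Longrightarrow> (\<Union>n. A (Suc n) \<inter> G x n) \<in> J"
    by (auto simp: UN_atMost_disjointed)
  have A_in: "A k \<in> J" for k
    using A unfolding partP_def hatP_def by blast
  define eps where "eps m = inverse (real (Suc (part_index A m)))" for m
  \<comment> \<open>the threshold of \<open>m \<in> A (Suc k)\<close> is that of \<open>G x k\<close>; \<open>A 0\<close> is given up\<close>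
  have "I_conv0 J eps"
    unfolding eps_def using \<open>ideal J\<close> A_in
    by (intro I_conv0_inverse_Suc) (simp_all add: part_index_atMost[OF A] ideal_finite_UN)
  moreover have "{n. eps n \<le> \<bar>f n x\<bar>} \<subseteq> A 0 \<union> (\<Union>n. A (Suc n) \<inter> G x n)" for x
  proof
    fix m
    assume m: "m \<in> {n. eps n \<le> \<bar>f n x\<bar>}"
    show "m \<in> A 0 \<union> (\<Union>n. A (Suc n) \<inter> G x n)"
    proof (cases "part_index A m")
      case 0
      then show ?thesis using in_part_index[OF A, of m] by simp
    next
      case (Suc k)
      then have "m \<in> A (Suc k) \<inter> G x k"
        using in_part_index[OF A, of m] m by (simp add: eps_def G_def)
      then show ?thesis by blast
    qed
  qed
  then have "{n. eps n \<le> \<bar>f n x\<bar>} \<in> J" if "x \<in> S" for x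
    using ideal_subset[OF \<open>ideal J\<close> ideal_Un[OF \<open>ideal J\<close> A_in small[OF that]]] by blast
  moreover have "0 < eps n" for n
    by (simp add: eps_def)
  ultimately show ?thesis
    unfolding I_quasi_normal0_def by blast
qed

lemma subset_if_card_less_addw_families:
  assumes "ideal K" and "S \<noteq> {}" and card: "card_less_min S (addw_families J K)"
  shows "J \<subseteq> K"
proof
  fix A
  assume "A \<in> J"
  have "(\<lambda>_. A) ` S \<notin> addw_families J K"
    by (rule image_notin_if_card_less_min[OF card])
  moreover have "(\<lambda>_. A) ` S = {A}"
    using \<open>S \<noteq> {}\<close> by blast
  ultimately have "{A} \<notin> addw_families J K"
    by simp
  then obtain B n where "\<forall>n. B n \<in> K" and "A \<subseteq> B n"
    using \<open>A \<in> J\<close> unfolding addw_families_def by auto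
  then show "A \<in> K"
    using ideal_subset[OF \<open>ideal K\<close>] by blast
qed

lemma I_sigma_uniform0_if_card_less_addw_families:
  assumes "ideal K" and "S \<noteq> {}" and card: "card_less_min S (addw_families J K)"
    and quasi_normal: "I_quasi_normal0 J S f"
  shows "I_sigma_uniform0 K S f"
proof -
  obtain eps where eps_conv: "I_conv0 J eps"
    and bad_in: "\<And>x. x \<in> S \<Longrightarrow> {n. eps n \<le> \<bar>f n x\<bar>} \<in> J"
    using quasi_normal unfolding I_quasi_normal0_def by blast
  have "I_conv0 K eps"
    using eps_conv subset_if_card_less_addw_families[OF assms(1-3)]
    unfolding I_conv0_def by blast
  define B where "B x = {n. eps n \<le> \<bar>f n x\<bar>}" for x
  have "B ` S \<subseteq> J"
    using bad_in unfolding B_def by blast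
  moreover have "B ` S \<notin> addw_families J K"
    by (rule image_notin_if_card_less_min[OF card])
  ultimately obtain C :: "nat \<Rightarrow> nat set" where C_in: "\<And>k. C k \<in> K"
    and cover: "\<forall>x\<in>S. \<exists>k. B x \<subseteq> C k"
    unfolding addw_families_def by auto
  define Xs where "Xs k = {x \<in> S. B x \<subseteq> C k}" for k
  have "I_uniform0 K (Xs k) f" for k
    unfolding I_uniform0_def
  proof (intro allI impI)
    fix e :: real
    assume "0 < e"
    have "{n. \<exists>x\<in>Xs k. e \<le> \<bar>f n x\<bar>} \<subseteq> C k \<union> {n. e \<le> \<bar>eps n\<bar>}"
    proof (intro subsetI)
      fix n
      assume "n \<in> {n. \<exists>x\<in>Xs k. e \<le> \<bar>f n x\<bar>}"
      then obtain x where "B x \<subseteq> C k" and "e \<le> \<bar>f n x\<bar>"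
        unfolding Xs_def by blast
      show "n \<in> C k \<union> {n. e \<le> \<bar>eps n\<bar>}"
      proof (cases "n \<in> C k")
        case False
        then have "\<bar>f n x\<bar> < eps n"
          using \<open>B x \<subseteq> C k\<close> unfolding B_def by (meson mem_Collect_eq not_le subsetD)
        then show ?thesis
          using \<open>e \<le> \<bar>f n x\<bar>\<close> by auto
      qed simp
    qed
    moreover have "{n. e \<le> \<bar>eps n\<bar>} \<in> K"
      using \<open>I_conv0 K eps\<close> \<open>0 < e\<close> unfolding I_conv0_def by blast
    then have "C k \<union> {n. e \<le> \<bar>eps n\<bar>} \<in> K"
      by (rule ideal_Un[OF \<open>ideal K\<close> C_in])
    ultimately show "{n. \<exists>x\<in>Xs k. e \<le> \<bar>f n x\<bar>} \<in> K"
      by (rule ideal_subset[OF \<open>ideal K\<close>, rotated])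
  qed
  moreover have "S = (\<Union>k. Xs k)"
    using cover unfolding Xs_def by blast
  ultimately show ?thesis
    unfolding I_sigma_uniform0_def by blast
qed

lemma I_sigma_uniform0_if_card_less_bsigma_families:
  assumes "ideal K" and card: "card_less_min S (bsigma_families I K)"
    and pointwise: "I_pointwise0 I S f"
  shows "I_sigma_uniform0 K S f"
proof -
  define E where "E x k = {n. inverse (real (Suc k)) \<le> \<bar>f n x\<bar>}" for x k
  have "E x \<in> monoM I" if "x \<in> S" for x
    unfolding monoM_def
  proof (intro CollectI conjI allI)
    show "E x k \<in> I" for k
      using pointwise that unfolding I_pointwise0_def I_conv0_def E_def by simp
    show "E x k \<subseteq> E x (Suc k)" for k
      unfolding E_def by (auto elim!: order.trans[rotated])
  qed
  then have "E ` S \<subseteq> monoM I"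
    by blast
  moreover have "E ` S \<notin> bsigma_families I K"
    by (rule image_notin_if_card_less_min[OF card])
  ultimately obtain A where "A \<in> monoM K"
    and eventually_below: "\<And>x. x \<in> S \<Longrightarrow> finite {k. \<not> E x k \<subseteq> A k}"
    unfolding bsigma_families_def by auto
  then have A_in: "A k \<in> K" for k
    unfolding monoM_def by blast
  define Xs where "Xs k = {x \<in> S. \<forall>j\<ge>k. E x j \<subseteq> A j}" for k
  have "I_uniform0 K (Xs k) f" for k
    unfolding I_uniform0_def
  proof (intro allI impI)
    fix e :: real
    assume "0 < e"
    show "{n. \<exists>x\<in>Xs k. e \<le> \<bar>f n x\<bar>} \<in> K"
    proof (rule antitone_family_in_ideal[where k = k, OF \<open>ideal K\<close> _ _ \<open>0 < e\<close>])
      show "{n. \<exists>x\<in>Xs k. e' \<le> \<bar>f n x\<bar>} \<subseteq> {n. \<exists>x\<in>Xs k. e \<le> \<bar>f n x\<bar>}"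
        if "e \<le> e'" for e e' :: real
        using that by force
      show "{n. \<exists>x\<in>Xs k. inverse (real (Suc j)) \<le> \<bar>f n x\<bar>} \<in> K" if "k \<le> j" for j
      proof (rule ideal_subset[OF \<open>ideal K\<close> A_in[of j]])
        show "{n. \<exists>x\<in>Xs k. inverse (real (Suc j)) \<le> \<bar>f n x\<bar>} \<subseteq> A j"
          using that unfolding Xs_def E_def by blast
      qed
    qed
  qed
  moreover have "S = (\<Union>k. Xs k)"
  proof (intro equalityI subsetI)
    fix x
    assume "x \<in> S"
    then obtain k where "{j. \<not> E x j \<subseteq> A j} \<subseteq> {..<k}"
      using eventually_below finite_nat_bounded by blast
    then have "\<forall>j\<ge>k. E x j \<subseteq> A j"
      by (meson lessThan_iff mem_Collect_eq not_le subsetD)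
    then show "x \<in> (\<Union>k. Xs k)"
      using \<open>x \<in> S\<close> unfolding Xs_def by blast
  qed (auto simp: Xs_def)
  ultimately show ?thesis
    unfolding I_sigma_uniform0_def by blast
qed

lemma I_pointwise0_indicator:
  assumes "ideal I" and "A \<in> I"
  shows "I_pointwise0 I S (\<lambda>n _. indicator A n)"
  unfolding I_pointwise0_def I_conv0_def
proof (intro ballI allI impI)
  fix e :: real
  assume "0 < e"
  then have "{n. e \<le> \<bar>indicator A n :: real\<bar>} \<subseteq> A"
    by (auto simp: indicator_def)
  then show "{n. e \<le> \<bar>indicator A n :: real\<bar>} \<in> I"
    by (rule ideal_subset[OF assms])
qed

lemma I_quasi_normal0_indicator:
  assumes "ideal J" and "A \<in> J"
  shows "I_quasi_normal0 J S (\<lambda>n _. indicator A n)"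
proof -
  have "I_conv0 J (\<lambda>n. inverse (real (Suc n)))"
    using I_conv0_inverse_Suc[OF \<open>ideal J\<close>, of id] ideal_finite[OF \<open>ideal J\<close>] by simp
  moreover have "{n. inverse (real (Suc n)) \<le> \<bar>indicator A n :: real\<bar>} \<subseteq> A"
    by (auto simp: indicator_def)
  then have "{n. inverse (real (Suc n)) \<le> \<bar>indicator A n :: real\<bar>} \<in> J"
    by (rule ideal_subset[OF assms])
  ultimately show ?thesis
    unfolding I_quasi_normal0_def by (intro exI[of _ "\<lambda>n. inverse (real (Suc n))"]) simp
qed

lemma mem_if_I_quasi_normal0_indicator:
  assumes "ideal J" and "S \<noteq> {}" and "I_quasi_normal0 J S (\<lambda>n _. indicator A n)"
  shows "A \<in> J"
proof -
  obtain eps where "I_conv0 J eps" and "{n. eps n \<le> \<bar>indicator A n :: real\<bar>} \<in> J"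
    using assms(2,3) unfolding I_quasi_normal0_def by blast
  moreover have "A \<subseteq> {n. eps n \<le> \<bar>indicator A n :: real\<bar>} \<union> {n. 1 \<le> \<bar>eps n\<bar>}"
    by (auto simp: indicator_def)
  ultimately show ?thesis
    unfolding I_conv0_def by (meson ideal_Un ideal_subset \<open>ideal J\<close> zero_less_one)
qed

lemma mem_if_I_sigma_uniform0_indicator:
  assumes "ideal K" and "S \<noteq> {}" and "I_sigma_uniform0 K S (\<lambda>n _. indicator A n)"
  shows "A \<in> K"
proof -
  obtain Xs :: "nat \<Rightarrow> _" where "S = (\<Union>k. Xs k)"
    and uniform: "\<And>k. I_uniform0 K (Xs k) (\<lambda>n _. indicator A n)"
    using assms(3) unfolding I_sigma_uniform0_def by blast
  then obtain k where "Xs k \<noteq> {}"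
    using \<open>S \<noteq> {}\<close> by blast
  then have "A \<subseteq> {n. \<exists>x\<in>Xs k. 1 \<le> \<bar>indicator A n :: real\<bar>}"
    by auto
  moreover have "{n. \<exists>x\<in>Xs k. 1 \<le> \<bar>indicator A n :: real\<bar>} \<in> K"
    using uniform[of k] unfolding I_uniform0_def by simp
  ultimately show ?thesis
    using ideal_subset[OF \<open>ideal K\<close>] by blast
qed

theorem theorem4p3:
  fixes I J K :: "nat set set" and X :: "'a topology"
  assumes "ideal I" and "ideal J" and "ideal K" and "topspace X \<noteq> {}"
  shows
   "(card_less_min (topspace X) (bs_families J J I) \<longrightarrow>
       (\<forall>f :: nat \<Rightarrow> 'a \<Rightarrow> real. (\<forall>n. continuous_map X euclideanreal (f n)) \<longrightarrow>
          I_pointwise0 I (topspace X) f \<longrightarrow> I_quasi_normal0 J (topspace X) f))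
    \<and> ((\<forall>f :: nat \<Rightarrow> 'a \<Rightarrow> real. (\<forall>n. continuous_map X euclideanreal (f n)) \<longrightarrow>
          I_pointwise0 I (topspace X) f \<longrightarrow> I_quasi_normal0 J (topspace X) f) \<longrightarrow> I \<subseteq> J)
    \<and> (card_less_min (topspace X) (addw_families J K) \<longrightarrow>
       (\<forall>f :: nat \<Rightarrow> 'a \<Rightarrow> real. (\<forall>n. continuous_map X euclideanreal (f n)) \<longrightarrow>
          I_quasi_normal0 J (topspace X) f \<longrightarrow> I_sigma_uniform0 K (topspace X) f))
    \<and> ((\<forall>f :: nat \<Rightarrow> 'a \<Rightarrow> real. (\<forall>n. continuous_map X euclideanreal (f n)) \<longrightarrow>
          I_quasi_normal0 J (topspace X) f \<longrightarrow> I_sigma_uniform0 K (topspace X) f) \<longrightarrow> J \<subseteq> K)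
    \<and> (card_less_min (topspace X) (bsigma_families I K) \<longrightarrow>
       (\<forall>f :: nat \<Rightarrow> 'a \<Rightarrow> real. (\<forall>n. continuous_map X euclideanreal (f n)) \<longrightarrow>
          I_pointwise0 I (topspace X) f \<longrightarrow> I_sigma_uniform0 K (topspace X) f))
    \<and> ((\<forall>f :: nat \<Rightarrow> 'a \<Rightarrow> real. (\<forall>n. continuous_map X euclideanreal (f n)) \<longrightarrow>
          I_pointwise0 I (topspace X) f \<longrightarrow> I_sigma_uniform0 K (topspace X) f) \<longrightarrow> I \<subseteq> K)"
  apply (intro conjI impI allI subsetI)
  subgoal
    by (rule I_quasi_normal0_if_card_less_bs_families[OF assms(1,2)])
  subgoal premises H for A
    using H(1)[rule_format, OF _ I_pointwise0_indicator[OF assms(1) H(2)]]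
    by (simp add: mem_if_I_quasi_normal0_indicator[OF assms(2,4)])
  subgoal
    by (rule I_sigma_uniform0_if_card_less_addw_families[OF assms(3,4)])
  subgoal premises H for A
    using H(1)[rule_format, OF _ I_quasi_normal0_indicator[OF assms(2) H(2)]]
    by (simp add: mem_if_I_sigma_uniform0_indicator[OF assms(3,4)])
  subgoal
    by (rule I_sigma_uniform0_if_card_less_bsigma_families[OF assms(3)])
  subgoal premises H for A
    using H(1)[rule_format, OF _ I_pointwise0_indicator[OF assms(1) H(2)]]
    by (simp add: mem_if_I_sigma_uniform0_indicator[OF assms(3,4)])
  done

end
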